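(* Let $\mathbf w\in\mathbb R^m$. (a) If $|\lambda|=2$, then $B_{\mathbf w}$ satisfies the strong majority criterion if and only if $\mathbf w(1)>\mathbf w(2)$. (b) If $|\lambda|>2$, then no nontrivial positional voting method $B_{\mathbf w}$ satisfies the strong majority criterion.
   Context: Fix an integer $n\ge 2$ and a set $\mathbf C$ of $n$ candidates. Fix a composition $\lambda=(\lambda_1,\dots,\lambda_m)$ of $n$ (positive integers with $\sum_i\lambda_i=n$), write $|\lambda|=m$ and $[m]=\{1,\dots,m\}$. A ballot is a function $b:\mathbf C\to[m]$ with $|b^{-1}(i)|=\lambda_i$ for every $i$; $\mathbf C_\lambda$ denotes the set of ballots. The profile space is $P=\mathbb R^{\mathbf C_\lambda}$ with basis $\{\delta_b\}$ (indicator functions) and inner product $\mathbf p\cdot\mathbf q=\sum_b\mathbf p(b)\mathbf q(b)$. For candidates $X,Y$: $\mathbf a_{X>Y}=\sum_{b:\,b(X)<b(Y)}\delta_b$ and $\mathbf r_{X>Y}=\mathbf a_{X>Y}-\mathbf a_{Y>X}$; by convention, $X$ defeats $Y$ in a head-to-head race in $\mathbf p$ iff $\mathbf p\cdot\mathbf r_{X>Y}>0$. For $\mathbf w\in\mathbb R^m$ (a function $[m]\to\mathbb R$) and $X\in\mathbf C$, $\mathbf v_X\in P$ is $\mathbf v_X(b)=\mathbf w(b(X))$; the positional voting method $B_{\mathbf w}:P\to\mathbb R^{\mathbf C}$ is $B_{\mathbf w}(\mathbf p)(X)=\mathbf p\cdot\mathbf v_X$. A map $F:P\to\mathbb R^{\mathbf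 C}$ is trivial if $F(\mathbf p)$ is a constant function on $\mathbf C$ for every $\mathbf p$, and nontrivial otherwise. $F$ satisfies the strong majority criterion if for every ordered pair of distinct candidates $X,Y$ and every $\mathbf p\in P$ with $\mathbf p\cdot\mathbf r_{X>Y}>0$, we have $F(\mathbf p)(X)>F(\mathbf p)(Y)$. *)

theory Defs
  imports Complex_Main
begin

(* Composition lambda = (lambda_1,...,lambda_m): a list lam, lambda_i = lam ! (i-1), m = length lam.
   Profiles: functions (('c => nat) => real); only values on ballots matter. *)

definition ballots :: "nat list \<Rightarrow> ('c::finite \<Rightarrow> nat) set" where
  "ballots lam = {b. (\<forall>X. b X \<in> {1..length lam}) \<and>
                     (\<forall>i\<in>{1..length lam}. card {X. b X = i} = lam ! (i - 1))}"

definition ip :: "nat list \<Rightarrow> (('c::finite \<Rightarrow> nat) \<Rightarrow> real) \<Rightarrow> (('c \<Rightarrow> nat) \<Rightarrow> real) \<Rightarrow> real" where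
  "ip lam p q = (\<Sum>b\<in>ballots lam. p b * q b)"

definition a_vec :: "'c \<Rightarrow> 'c \<Rightarrow> ('c \<Rightarrow> nat) \<Rightarrow> real" where
  "a_vec X Y = (\<lambda>b. if b X < b Y then 1 else 0)"

definition r_vec :: "'c \<Rightarrow> 'c \<Rightarrow> ('c \<Rightarrow> nat) \<Rightarrow> real" where
  "r_vec X Y = (\<lambda>b. a_vec X Y b - a_vec Y X b)"

definition v_vec :: "(nat \<Rightarrow> real) \<Rightarrow> 'c \<Rightarrow> ('c \<Rightarrow> nat) \<Rightarrow> real" where
  "v_vec w X = (\<lambda>b. w (b X))"

definition positional :: "nat list \<Rightarrow> (nat \<Rightarrow> real) \<Rightarrow> (('c::finite \<Rightarrow> nat) \<Rightarrow> real) \<Rightarrow> 'c \<Rightarrow> real" where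
  "positional lam w p X = ip lam p (v_vec w X)"

definition trivial_method :: "((('c \<Rightarrow> nat) \<Rightarrow> real) \<Rightarrow> 'c \<Rightarrow> real) \<Rightarrow> bool" where
  "trivial_method F \<longleftrightarrow> (\<forall>p. \<exists>c. \<forall>X. F p X = c)"

definition strong_majority :: "nat list \<Rightarrow> ((('c::finite \<Rightarrow> nat) \<Rightarrow> real) \<Rightarrow> 'c \<Rightarrow> real) \<Rightarrow> bool" where
  "strong_majority lam F \<longleftrightarrow>
     (\<forall>X Y p. X \<noteq> Y \<longrightarrow> ip lam p (r_vec X Y) > 0 \<longrightarrow> F p X > F p Y)"

end

theory Submission
  imports Defs "HOL-Library.FuncSet"
begin

text \<open>For two ranks a ballot only records which of X, Y is ahead, so
  B_w(p)(X) - B_w(p)(Y) = (w 1 - w 2) (p \<cdot> r_{X>Y}), and strong majority reduces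
  to the sign of w 1 - w 2 (a single ballot ranking X first and Y second forces
  w 1 > w 2). With at least three ranks, take ballots b1, b2, b3 placing (X, Y) at
  ranks (1,2), (2,3), (1,3). The profile \<delta>_{b1} + \<delta>_{b2} - \<delta>_{b3} has
  p \<cdot> r_{X>Y} = 1 + 1 - 1 = 1, yet both X and Y score w 2. So strong majority fails
  for every w.\<close>

lemma finite_ballots: "finite (ballots lam :: ('c::finite \<Rightarrow> nat) set)"
proof -
  have "ballots lam \<subseteq> Pi\<^sub>E (UNIV::'c set) (\<lambda>_. {1..length lam})"
    unfolding ballots_def by (auto simp: PiE_def Pi_def)
  moreover have "finite (Pi\<^sub>E (UNIV::'c set) (\<lambda>_. {1..length lam}))"
    by (rule finite_PiE) auto
  ultimately show ?thesis by (rule finite_subset)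
qed

lemma ip_add_left: "ip lam (\<lambda>b. p b + q b) s = ip lam p s + ip lam q s"
  unfolding ip_def by (simp add: algebra_simps sum.distrib)

lemma ip_diff_left: "ip lam (\<lambda>b. p b - q b) s = ip lam p s - ip lam q s"
  unfolding ip_def by (simp add: algebra_simps sum_subtractf)

lemma ip_indicator_left:
  assumes "b \<in> ballots lam"
  shows "ip lam (\<lambda>c. if c = b then 1 else 0) q = q (b::'c::finite \<Rightarrow> nat)"
proof -
  have "ip lam (\<lambda>c. if c = b then 1 else 0) q = (\<Sum>c\<in>ballots lam. if c = b then q c else 0)"
    unfolding ip_def by (rule sum.cong) auto
  also have "\<dots> = q b"
    using assms finite_ballots[of lam] by (subst sum.delta) auto
  finally show ?thesis .
qed

lemma bij_betw_prescribe_two: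
  assumes "finite A" "card A = card B"
    and "x \<in> A" "y \<in> A" "x \<noteq> y" "x' \<in> B" "y' \<in> B" "x' \<noteq> y'"
  shows "\<exists>f. bij_betw f A B \<and> f x = x' \<and> f y = y'"
proof -
  have "finite B"
  proof (rule ccontr)
    assume "infinite B"
    then have "card A = 0" using assms(2) by simp
    with assms(1,3) show False by auto
  qed
  moreover have "card (A - {x,y}) = card (B - {x',y'})"
    using assms by (simp add: card_Diff_subset)
  ultimately obtain g where g: "bij_betw g (A - {x,y}) (B - {x',y'})"
    using finite_same_card_bij[of "A - {x,y}" "B - {x',y'}"] assms(1) by auto
  define f where "f z = (if z = x then x' else if z = y then y' else g z)" for z
  have "bij_betw f (A - {x,y}) (B - {x',y'})"
    using g by (rule bij_betw_cong[THEN iffD1, rotated]) (auto simp: f_def)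
  moreover have "bij_betw f {x,y} {x',y'}"
    using assms by (auto simp: bij_betw_def f_def inj_on_def)
  ultimately have "bij_betw f ((A - {x,y}) \<union> {x,y}) ((B - {x',y'}) \<union> {x',y'})"
    by (rule bij_betw_combine) auto
  moreover have "(A - {x,y}) \<union> {x,y} = A" "(B - {x',y'}) \<union> {x',y'} = B"
    using assms by auto
  ultimately show ?thesis using assms(5) by (auto simp: f_def)
qed

text \<open>A ballot is the same thing as a bijection of the candidates onto the slots
  (k, j) with j < \<lambda>_k, read off by the first component.\<close>

definition ballot_slots :: "nat list \<Rightarrow> (nat \<times> nat) set" where
  "ballot_slots lam = Sigma {1..length lam} (\<lambda>k. {..<lam ! (k - 1)})"

lemma card_ballot_slots:
  assumes "sum_list lam = card (UNIV :: 'c::finite set)"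
  shows "card (ballot_slots lam) = card (UNIV :: 'c set)"
proof -
  have "card (ballot_slots lam) = (\<Sum>k\<in>{1..length lam}. lam ! (k - 1))"
    unfolding ballot_slots_def by (simp add: card_SigmaI)
  also have "\<dots> = (\<Sum>k<length lam. lam ! k)"
    by (simp add: sum.atLeast1_atMost_eq)
  also have "\<dots> = card (UNIV :: 'c set)"
    using assms by (simp add: sum_list_sum_nth atLeast0LessThan)
  finally show ?thesis .
qed

lemma fst_bij_in_ballots:
  assumes "bij_betw f (UNIV :: 'c::finite set) (ballot_slots lam)"
  shows "fst \<circ> f \<in> ballots lam"
  unfolding ballots_def
proof (intro CollectI conjI allI ballI)
  have f_in: "f Z \<in> ballot_slots lam" for Z
    using assms by (auto simp: bij_betw_def)
  fix Z show "(fst \<circ> f) Z \<in> {1..length lam}"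
    using f_in[of Z] by (auto simp: ballot_slots_def)
next
  fix k assume k: "k \<in> {1..length lam}"
  have "bij_betw f {Z. (fst \<circ> f) Z = k} {s \<in> ballot_slots lam. fst s = k}"
    by (rule bij_betw_subset[OF assms]) (use assms in \<open>force simp: bij_betw_def\<close>)+
  then have "card {Z. (fst \<circ> f) Z = k} = card {s \<in> ballot_slots lam. fst s = k}"
    by (rule bij_betw_same_card)
  also have "{s \<in> ballot_slots lam. fst s = k} = {k} \<times> {..<lam ! (k - 1)}"
    using k by (auto simp: ballot_slots_def)
  finally show "card {Z. (fst \<circ> f) Z = k} = lam ! (k - 1)"
    by (simp add: card_cartesian_product)
qed

lemma ex_ballot_ranks:
  fixes X Y :: "'c::finite"
  assumes "\<forall>i\<in>set lam. i > 0" and "sum_list lam = card (UNIV :: 'c set)"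
    and "X \<noteq> Y" "i \<in> {1..length lam}" "j \<in> {1..length lam}" "i \<noteq> j"
  shows "\<exists>b\<in>ballots lam. b X = i \<and> b Y = j"
proof -
  have "lam ! (k - 1) > 0" if "k \<in> {1..length lam}" for k
    using assms(1) that by (auto intro!: nth_mem bspec[OF assms(1)])
  then have "(i, 0) \<in> ballot_slots lam" "(j, 0) \<in> ballot_slots lam"
    using assms(4,5) by (auto simp: ballot_slots_def)
  then obtain f where f: "bij_betw f UNIV (ballot_slots lam)" "f X = (i, 0)" "f Y = (j, 0)"
    using bij_betw_prescribe_two[of UNIV "ballot_slots lam" X Y "(i, 0)" "(j, 0)"]
      card_ballot_slots[OF assms(2)] assms(3,6) by auto
  then show ?thesis using fst_bij_in_ballots[OF f(1)] by (intro bexI[of _ "fst \<circ> f"]) auto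
qed

lemma positional_diff_two_ranks:
  assumes "length lam = 2"
  shows "positional lam w p X - positional lam w p Y = (w 1 - w 2) * ip lam p (r_vec X Y)"
proof -
  have "positional lam w p X - positional lam w p Y
      = (\<Sum>b\<in>ballots lam. p b * (w (b X) - w (b Y)))"
    unfolding positional_def ip_def v_vec_def by (simp add: sum_subtractf algebra_simps)
  also have "\<dots> = (\<Sum>b\<in>ballots lam. (w 1 - w 2) * (p b * r_vec X Y b))"
  proof (rule sum.cong[OF refl])
    fix b :: "'a \<Rightarrow> nat" assume "b \<in> ballots lam"
    then have "b X \<in> {1, 2}" "b Y \<in> {1, 2}"
      using assms unfolding ballots_def
      by (auto, metis le_antisym not_less_eq_eq numeral_2_eq_2)+
    then show "p b * (w (b X) - w (b Y)) = (w 1 - w 2) * (p b * r_vec X Y b)"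
      unfolding r_vec_def a_vec_def by (auto simp: algebra_simps)
  qed
  also have "\<dots> = (w 1 - w 2) * ip lam p (r_vec X Y)"
    unfolding ip_def by (simp add: sum_distrib_left)
  finally show ?thesis .
qed

lemma strong_majority_positional_two_ranks_iff:
  fixes X Y :: "'c::finite"
  assumes "\<forall>i\<in>set lam. i > 0" and "sum_list lam = card (UNIV :: 'c set)"
    and "X \<noteq> Y" "length lam = 2"
  shows "strong_majority lam (positional lam w :: (('c \<Rightarrow> nat) \<Rightarrow> real) \<Rightarrow> 'c \<Rightarrow> real)
           \<longleftrightarrow> w 1 > w 2"
proof
  assume sm: "strong_majority lam (positional lam w :: (('c \<Rightarrow> nat) \<Rightarrow> real) \<Rightarrow> 'c \<Rightarrow> real)"
  obtain b where b: "b \<in> ballots lam" "b X = 1" "b Y = 2"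
    using ex_ballot_ranks[OF assms(1-3), of 1 2] assms(4) by auto
  define p where "p = (\<lambda>c. if c = b then 1 else (0::real))"
  have margin: "ip lam p (r_vec X Y) = 1"
    unfolding p_def ip_indicator_left[OF b(1)] using b by (simp add: r_vec_def a_vec_def)
  then have "positional lam w p X > positional lam w p Y"
    using sm assms(3) unfolding strong_majority_def by auto
  then show "w 1 > w 2"
    using positional_diff_two_ranks[OF assms(4), of w p X Y] margin by simp
next
  assume "w 1 > w 2"
  then show "strong_majority lam (positional lam w :: (('c \<Rightarrow> nat) \<Rightarrow> real) \<Rightarrow> 'c \<Rightarrow> real)"
    unfolding strong_majority_def
    using positional_diff_two_ranks[OF assms(4)] by (metis diff_gt_0_iff_gt mult_pos_pos)
qed

lemma not_strong_majority_positional: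
  fixes X Y :: "'c::finite"
  assumes "\<forall>i\<in>set lam. i > 0" and "sum_list lam = card (UNIV :: 'c set)"
    and XY: "X \<noteq> Y" and "length lam > 2"
  shows "\<not> strong_majority lam (positional lam w :: (('c \<Rightarrow> nat) \<Rightarrow> real) \<Rightarrow> 'c \<Rightarrow> real)"
proof -
  obtain b1 where b1: "b1 \<in> ballots lam" "b1 X = 1" "b1 Y = 2"
    using ex_ballot_ranks[OF assms(1,2) XY, of 1 2] assms(4) by auto
  obtain b2 where b2: "b2 \<in> ballots lam" "b2 X = 2" "b2 Y = 3"
    using ex_ballot_ranks[OF assms(1,2) XY, of 2 3] assms(4) by auto
  obtain b3 where b3: "b3 \<in> ballots lam" "b3 X = 1" "b3 Y = 3"
    using ex_ballot_ranks[OF assms(1,2) XY, of 1 3] assms(4) by auto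
  define p where "p = (\<lambda>c. (if c = b1 then 1 else 0) + (if c = b2 then 1 else 0)
                             - (if c = b3 then 1 else (0::real)))"
  have ip_p: "ip lam p q = q b1 + q b2 - q b3" for q
    unfolding p_def ip_diff_left ip_add_left
    by (simp add: ip_indicator_left b1(1) b2(1) b3(1))
  have "ip lam p (r_vec X Y) > 0"
    using b1 b2 b3 by (simp add: ip_p r_vec_def a_vec_def)
  moreover have "positional lam w p X = positional lam w p Y"
    using b1 b2 b3 by (simp add: positional_def ip_p v_vec_def)
  ultimately show ?thesis
    using XY unfolding strong_majority_def by force
qed

theorem mainTheorem10:
  fixes lam :: "nat list" and w :: "nat \<Rightarrow> real"
  assumes "card (UNIV :: 'c::finite set) \<ge> 2"
    and "\<forall>i\<in>set lam. i > 0"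
    and "sum_list lam = card (UNIV :: 'c set)"
  shows "(length lam = 2 \<longrightarrow>
            (strong_majority lam (positional lam w :: (('c \<Rightarrow> nat) \<Rightarrow> real) \<Rightarrow> 'c \<Rightarrow> real)
               \<longleftrightarrow> w 1 > w 2))
       \<and> (length lam > 2 \<longrightarrow>
            \<not> trivial_method (positional lam w :: (('c \<Rightarrow> nat) \<Rightarrow> real) \<Rightarrow> 'c \<Rightarrow> real) \<longrightarrow>
            \<not> strong_majority lam (positional lam w :: (('c \<Rightarrow> nat) \<Rightarrow> real) \<Rightarrow> 'c \<Rightarrow> real))"
proof -
  obtain X Y :: 'c where "X \<noteq> Y"
    using assms(1) card_le_Suc0_iff_eq[of "UNIV :: 'c set"] by fastforce
  then show ?thesis
    using strong_majority_positional_two_ranks_iff[OF assms(2,3)]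
      not_strong_majority_positional[OF assms(2,3)] by blast
qed

end
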